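(* Let $(\Omega,\mathcal F,(\mathcal F_t)_{t\ge0},\mathbb P)$ be a filtered probability space satisfying the usual conditions, $B$ an $(\mathcal F_t)$-adapted $d$-dimensional Brownian motion started at $0$, and let $\mathbf I=\{1,\dots,m\}$, $m\ge1$. For each $i\in\mathbf I$ let $\phi_i:\mathbb R\to(-\infty,+\infty]$ be convex and lower semicontinuous with $\phi_i=+\infty$ on $(-\infty,0)$ and $\phi_i$ of class $C^1$ on $(0,\infty)$; let $n_i$ be pairwise distinct unit vectors of $\mathbb R^d$ and $a_i\in\mathbb R$. Set $\Phi(x)=\sum_{i\in\mathbf I}\phi_i(x\cdot n_i-a_i)$, $D=\{x: x\cdot n_i>a_i\ \forall i\}$, assumed nonempty, so $\overline D=\{x:x\cdot n_i\ge a_i\ \forall i\}$. Let $(X,L)$ be the solution of the multivalued SDE associated with $\Phi$ (see context) with $\mathcal F_0$-measurable initial condition $X_0\in\overline D$, and set $U^i_t=X_t\cdot n_i-a_i$. Then for every $i\in\mathbf I$ and every $0<t<\infty$, almost surely $$\int_0^t|\phi_i'(U^i_s)|\,ds<\infty.$$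
   Context: A unit vector $n(x)$ is a unit inward normal to $D$ at $x\in\partial D$ if $n(x)\cdot(x-z)\le0$ for all $z\in\overline D$. The solution of the multivalued SDE associated with $\Phi$ (which exists and is unique) is the pair consisting of a continuous $(\mathcal F_t)$-adapted $\overline D$-valued process $X$ and a continuous $(\mathcal F_t)$-adapted nondecreasing process $L$ such that for all $t\ge0$: $X_t=X_0+B_t-\int_0^t\nabla\Phi(X_s)\,ds+\int_0^t n_s\,dL_s$ and $L_t=\int_0^t\mathbf 1_{\{X_s\in\partial D\}}dL_s$, where $n_s$ is $dL_s$-a.e. a unit inward normal to $D$ at $X_s$; here $\nabla\Phi(x)=\sum_i n_i\phi_i'(x\cdot n_i-a_i)$ on $D$. This solution also satisfies $\int_0^T\mathbf 1_{\{X_s\in\partial D\}}ds=0$ and $\int_0^T|\nabla\Phi(X_s)|ds<\infty$ for all $T<\infty$. *)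

theory Defs
  imports "HOL-Probability.Probability"
begin

definition filtration_on :: "'w measure \<Rightarrow> (real \<Rightarrow> 'w measure) \<Rightarrow> bool" where
  "filtration_on M F \<longleftrightarrow>
     (\<forall>t\<ge>0. space (F t) = space M \<and> sets (F t) \<subseteq> sets M) \<and>
     (\<forall>s t. 0 \<le> s \<longrightarrow> s \<le> t \<longrightarrow> sets (F s) \<subseteq> sets (F t))"

definition usual_conditions :: "'w measure \<Rightarrow> (real \<Rightarrow> 'w measure) \<Rightarrow> bool" where
  "usual_conditions M F \<longleftrightarrow>
     filtration_on M F \<and>
     (\<forall>N\<in>null_sets M. \<forall>A. A \<subseteq> N \<longrightarrow> A \<in> sets M) \<and>
     (\<forall>A. A \<subseteq> space M \<and> (\<exists>N\<in>null_sets M. A \<subseteq> N) \<longrightarrow> A \<in> sets (F 0)) \<and>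
     (\<forall>t\<ge>0. sets (F t) = (\<Inter>s\<in>{t<..}. sets (F s)))"

definition adapted :: "(real \<Rightarrow> 'w measure) \<Rightarrow> (real \<Rightarrow> 'w \<Rightarrow> 'b::topological_space) \<Rightarrow> bool" where
  "adapted F X \<longleftrightarrow> (\<forall>t\<ge>0. X t \<in> borel_measurable (F t))"

definition brownian_motion ::
  "'w measure \<Rightarrow> (real \<Rightarrow> 'w measure) \<Rightarrow> (real \<Rightarrow> 'w \<Rightarrow> real^'d) \<Rightarrow> bool" where
  "brownian_motion M F B \<longleftrightarrow>
     adapted F B \<and>
     (\<forall>\<omega>\<in>space M. B 0 \<omega> = 0 \<and> continuous_on {0..} (\<lambda>t. B t \<omega>)) \<and>
     (\<forall>s t. 0 \<le> s \<longrightarrow> s < t \<longrightarrow>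
        distributed M lborel (\<lambda>\<omega>. B t \<omega> - B s \<omega>)
          (\<lambda>x. ennreal (\<Prod>j\<in>UNIV. normal_density 0 (sqrt (t - s)) (x $ j))) \<and>
        (\<forall>A\<in>sets (F s). \<forall>C\<in>sets (borel :: (real^'d) measure).
           measure M (A \<inter> ((\<lambda>\<omega>. B t \<omega> - B s \<omega>) -` C \<inter> space M)) =
           measure M A * measure M ((\<lambda>\<omega>. B t \<omega> - B s \<omega>) -` C \<inter> space M)))"

definition ereal_convex :: "(real \<Rightarrow> ereal) \<Rightarrow> bool" where
  "ereal_convex f \<longleftrightarrow> (\<forall>x y (u::real). 0 \<le> u \<longrightarrow> u \<le> 1 \<longrightarrow>
      f (u * x + (1 - u) * y) \<le> ereal u * f x + ereal (1 - u) * f y)"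

definition ereal_lsc :: "(real \<Rightarrow> ereal) \<Rightarrow> bool" where
  "ereal_lsc f \<longleftrightarrow> (\<forall>x. f x \<le> Liminf (at x) f)"

definition unit_inward_normal :: "(real^'d) set \<Rightarrow> real^'d \<Rightarrow> real^'d \<Rightarrow> bool" where
  "unit_inward_normal D x v \<longleftrightarrow>
     x \<in> frontier D \<and> norm v = 1 \<and> (\<forall>z\<in>closure D. v \<bullet> (x - z) \<le> 0)"

text \<open>Pathwise solution of
  X_t = X_0 + B_t - int_0^t gradPhi(X_s) ds + int_0^t n_s dL_s,  L_t = int_0^t 1_{dD}(X_s) dL_s.
  dL is the Lebesgue--Stieltjes measure of L (extended by L_0 = 0 to negative times).\<close>

definition LS_measure :: "(real \<Rightarrow> real) \<Rightarrow> real measure" where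
  "LS_measure l = interval_measure (\<lambda>s. l (max s 0))"

definition msde_solution ::
  "'w measure \<Rightarrow> (real \<Rightarrow> 'w measure) \<Rightarrow> (real \<Rightarrow> 'w \<Rightarrow> real^'d) \<Rightarrow> (real^'d) set \<Rightarrow>
   (real^'d \<Rightarrow> real^'d) \<Rightarrow> (real \<Rightarrow> 'w \<Rightarrow> real^'d) \<Rightarrow> (real \<Rightarrow> 'w \<Rightarrow> real) \<Rightarrow> bool" where
  "msde_solution M F B D gradPhi X L \<longleftrightarrow>
     adapted F X \<and> adapted F L \<and>
     (\<forall>\<omega>\<in>space M. continuous_on {0..} (\<lambda>t. X t \<omega>) \<and> (\<forall>t\<ge>0. X t \<omega> \<in> closure D) \<and>
        continuous_on {0..} (\<lambda>t. L t \<omega>) \<and> mono_on {0..} (\<lambda>t. L t \<omega>) \<and> L 0 \<omega> = 0) \<and>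
     (AE \<omega> in M. (AE s in lborel. 0 \<le> s \<longrightarrow> X s \<omega> \<in> D) \<and> (\<exists>n :: real \<Rightarrow> real^'d.
        (AE s in LS_measure (\<lambda>t. L t \<omega>). 0 \<le> s \<longrightarrow> unit_inward_normal D (X s \<omega>) (n s)) \<and>
        (\<forall>t\<ge>0.
           set_integrable lborel {0..t} (\<lambda>s. gradPhi (X s \<omega>)) \<and>
           set_integrable (LS_measure (\<lambda>t. L t \<omega>)) {0..t} n \<and>
           X t \<omega> = X 0 \<omega> + B t \<omega>
                    - set_lebesgue_integral lborel {0..t} (\<lambda>s. gradPhi (X s \<omega>))
                    + set_lebesgue_integral (LS_measure (\<lambda>t. L t \<omega>)) {0..t} n \<and>
           L t \<omega> = set_lebesgue_integral (LS_measure (\<lambda>t. L t \<omega>)) {0..t}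
                      (\<lambda>s. indicator (frontier D) (X s \<omega>)))))"

end

theory Submission
  imports Defs
begin

text \<open>
  The argument is pathwise. Fix a point \<open>z \<in> D\<close> and put \<open>u\<^sub>j = x \<bullet> n\<^sub>j - a\<^sub>j\<close>,
  \<open>c\<^sub>j = z \<bullet> n\<^sub>j - a\<^sub>j > 0\<close>. Then
  \<open>\<nabla>\<Phi>(x) \<bullet> (x - z) = (\<Sum>j. \<phi>\<^sub>j'(u\<^sub>j) (u\<^sub>j - c\<^sub>j))\<close>, and monotonicity of the derivative of
  the convex \<open>\<phi>\<^sub>j\<close> bounds every summand below by \<open>\<phi>\<^sub>j'(c\<^sub>j) (u\<^sub>j - c\<^sub>j)\<close>. On a bounded set
  each summand is therefore controlled by \<open>|\<nabla>\<Phi>(x)|\<close>. Near the face \<open>u\<^sub>i = 0\<close> the factor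
  \<open>|u\<^sub>i - c\<^sub>i|\<close> is at least \<open>c\<^sub>i / 2\<close>, and away from it \<open>\<phi>\<^sub>i'\<close> is bounded by continuity, so
  \<open>|\<phi>\<^sub>i'(u\<^sub>i)| \<le> k\<^sub>1 |\<nabla>\<Phi>(x)| + k\<^sub>2\<close> along a path bounded on \<open>[0, t]\<close>. The definition of a
  solution provides that \<open>X\<^sub>s \<in> D\<close> for a.e. \<open>s\<close> and that \<open>\<nabla>\<Phi>(X)\<close> is integrable on \<open>[0, t]\<close>.
\<close>

lemma convex_on_deriv_monotone:
  fixes f f' :: "real \<Rightarrow> real"
  assumes "convex_on A f" "connected A" "u \<in> interior A" "c \<in> interior A"
    and "\<And>x. x \<in> interior A \<Longrightarrow> (f has_field_derivative f' x) (at x within A)"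
  shows "(f' u - f' c) * (u - c) \<ge> 0"
proof -
  have "f u - f c \<ge> f' c * (u - c)"
    using assms interior_subset by (intro convex_on_imp_above_tangent[OF assms(1,2,4)]) auto
  moreover have "f c - f u \<ge> f' u * (c - u)"
    using assms interior_subset by (intro convex_on_imp_above_tangent[OF assms(1,2,3)]) auto
  ultimately show ?thesis by (simp add: algebra_simps)
qed

lemma ereal_convex_imp_convex_on:
  fixes \<phi> :: "real \<Rightarrow> ereal"
  assumes "ereal_convex \<phi>" "convex A" "\<And>x. x \<in> A \<Longrightarrow> \<bar>\<phi> x\<bar> \<noteq> \<infinity>"
  shows "convex_on A (\<lambda>x. real_of_ereal (\<phi> x))"
proof (rule convex_onI)
  fix t x y :: real assume t: "0 < t" "t < 1" and xy: "x \<in> A" "y \<in> A"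
  have "(1 - t) *\<^sub>R x + t *\<^sub>R y \<in> A"
    using convexD[OF \<open>convex A\<close> xy, of "1 - t" t] t by simp
  then have fin: "\<bar>\<phi> ((1 - t) * x + (1 - (1 - t)) * y)\<bar> \<noteq> \<infinity>"
    using assms(3) by simp
  have "\<phi> ((1 - t) * x + (1 - (1 - t)) * y) \<le> ereal (1 - t) * \<phi> x + ereal (1 - (1 - t)) * \<phi> y"
    using assms(1)[unfolded ereal_convex_def, rule_format, of "1 - t" x y] t by simp
  with fin assms(3)[OF xy(1)] assms(3)[OF xy(2)]
  show "real_of_ereal (\<phi> ((1 - t) *\<^sub>R x + t *\<^sub>R y))
          \<le> (1 - t) * real_of_ereal (\<phi> x) + t * real_of_ereal (\<phi> y)"
    by (cases "\<phi> x"; cases "\<phi> y"; cases "\<phi> ((1 - t) * x + (1 - (1 - t)) * y)") auto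
qed (rule assms(2))

lemma ereal_convex_deriv_monotone:
  fixes \<phi> :: "real \<Rightarrow> ereal"
  assumes "ereal_convex \<phi>" "\<And>x. x > 0 \<Longrightarrow> \<bar>\<phi> x\<bar> \<noteq> \<infinity>"
    and "\<And>x. x > 0 \<Longrightarrow> ((\<lambda>y. real_of_ereal (\<phi> y)) has_real_derivative \<phi>' x) (at x)"
    and "u > 0" "c > 0"
  shows "(\<phi>' u - \<phi>' c) * (u - c) \<ge> 0"
proof (rule convex_on_deriv_monotone)
  show "convex_on {0<..} (\<lambda>x. real_of_ereal (\<phi> x))"
    using assms(1,2) by (intro ereal_convex_imp_convex_on) auto
  show "((\<lambda>x. real_of_ereal (\<phi> x)) has_field_derivative \<phi>' x) (at x within {0<..})"
    if "x \<in> interior {0<..}" for x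
    using assms(3)[of x] that by (simp add: interior_open has_field_derivative_at_within)
qed (use assms(4,5) in \<open>auto simp: interior_open\<close>)

lemma abs_le_abs_sum_add_bounds:
  fixes g C :: "'a \<Rightarrow> real"
  assumes "finite I" "i \<in> I" "\<And>j. j \<in> I \<Longrightarrow> 0 \<le> C j" "\<And>j. j \<in> I \<Longrightarrow> - C j \<le> g j"
  shows "\<bar>g i\<bar> \<le> \<bar>\<Sum>j\<in>I. g j\<bar> + (\<Sum>j\<in>I. C j)"
proof -
  have "(\<Sum>j\<in>I - {i}. - C j) \<le> (\<Sum>j\<in>I - {i}. g j)"
    using assms(4) by (intro sum_mono) auto
  moreover have "(\<Sum>j\<in>I - {i}. C j) \<le> (\<Sum>j\<in>I. C j)" "C i \<le> (\<Sum>j\<in>I. C j)"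
    using assms by (auto intro: sum_mono2 member_le_sum)
  moreover have "(\<Sum>j\<in>I. g j) = g i + (\<Sum>j\<in>I - {i}. g j)"
    using assms(1,2) by (simp add: sum.remove)
  ultimately show ?thesis
    using assms(4)[OF assms(2)] by (simp add: sum_negf)
qed

lemma nn_integral_finite_if_le_affine_norm:
  fixes f :: "'a \<Rightarrow> 'b::real_normed_vector" and g :: "'a \<Rightarrow> 'c::{banach, second_countable_topology}"
  assumes "set_integrable M A g"
    and "AE x in M. x \<in> A \<longrightarrow> norm (f x) \<le> k1 * norm (g x) + k2"
    and "A \<in> sets M" "emeasure M A < \<infinity>"
  shows "(\<integral>\<^sup>+ x\<in>A. ennreal (norm (f x)) \<partial>M) < \<infinity>"
proof -
  define h where "h x = indicator A x * (k1 * norm (g x) + k2)" for x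
  have "integrable M (\<lambda>x. norm (indicator A x *\<^sub>R g x))"
    using assms(1) unfolding set_integrable_def by (rule integrable_norm)
  moreover have "integrable M (indicator A :: 'a \<Rightarrow> real)"
    using assms(3,4) by (simp add: integrable_real_indicator)
  ultimately have "integrable M h"
    unfolding h_def by (simp add: distrib_left mult.left_commute)
  have "(\<integral>\<^sup>+ x\<in>A. ennreal (norm (f x)) \<partial>M) \<le> (\<integral>\<^sup>+ x. ennreal (norm (h x)) \<partial>M)"
    using assms(2) by (intro nn_integral_mono_AE) (auto simp: h_def indicator_def elim!: eventually_mono)
  also have "\<dots> < \<infinity>"
    using \<open>integrable M h\<close> by (simp add: integrable_iff_bounded)
  finally show ?thesis .
qed

lemma gradient_pairing_component_bound:
  fixes nv :: "'i \<Rightarrow> 'a::real_inner" and p :: "'i \<Rightarrow> real \<Rightarrow> real"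
  assumes "finite I" "i \<in> I"
    and z: "\<And>j. j \<in> I \<Longrightarrow> z \<bullet> nv j > a j" and y: "\<And>j. j \<in> I \<Longrightarrow> y \<bullet> nv j > a j"
    and mono: "\<And>j u c. j \<in> I \<Longrightarrow> u > 0 \<Longrightarrow> c > 0 \<Longrightarrow> (p j u - p j c) * (u - c) \<ge> 0"
  shows "\<bar>p i (y \<bullet> nv i - a i) * ((y - z) \<bullet> nv i)\<bar>
           \<le> norm (\<Sum>j\<in>I. p j (y \<bullet> nv j - a j) *\<^sub>R nv j) * norm (y - z)
             + (\<Sum>j\<in>I. \<bar>p j (z \<bullet> nv j - a j)\<bar> * \<bar>(y - z) \<bullet> nv j\<bar>)"
proof -
  define g where "g j = p j (y \<bullet> nv j - a j) * ((y - z) \<bullet> nv j)" for j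
  define C where "C j = \<bar>p j (z \<bullet> nv j - a j)\<bar> * \<bar>(y - z) \<bullet> nv j\<bar>" for j
  have "- C j \<le> g j" if "j \<in> I" for j
  proof -
    have diff: "(y - z) \<bullet> nv j = (y \<bullet> nv j - a j) - (z \<bullet> nv j - a j)"
      by (simp add: inner_diff_left)
    have "p j (z \<bullet> nv j - a j) * ((y - z) \<bullet> nv j) \<le> g j"
      using mono[OF that, of "y \<bullet> nv j - a j" "z \<bullet> nv j - a j"] y[OF that] z[OF that]
      unfolding g_def diff by (simp add: algebra_simps)
    moreover have "- C j \<le> p j (z \<bullet> nv j - a j) * ((y - z) \<bullet> nv j)"
      unfolding C_def abs_mult[symmetric] by linarith
    ultimately show ?thesis by linarith
  qed
  then have "\<bar>g i\<bar> \<le> \<bar>\<Sum>j\<in>I. g j\<bar> + (\<Sum>j\<in>I. C j)"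
    using assms(1,2) by (intro abs_le_abs_sum_add_bounds) (auto simp: C_def)
  also have "(\<Sum>j\<in>I. g j) = (y - z) \<bullet> (\<Sum>j\<in>I. p j (y \<bullet> nv j - a j) *\<^sub>R nv j)"
    by (simp add: g_def inner_sum_right)
  also have "\<bar>\<dots>\<bar> \<le> norm (y - z) * norm (\<Sum>j\<in>I. p j (y \<bullet> nv j - a j) *\<^sub>R nv j)"
    by (rule Cauchy_Schwarz_ineq2)
  finally show ?thesis by (simp add: g_def C_def mult.commute)
qed

lemma gradient_component_bound:
  fixes nv :: "'i \<Rightarrow> 'a::real_inner" and p :: "'i \<Rightarrow> real \<Rightarrow> real"
  assumes "finite I" "i \<in> I"
    and z: "\<And>j. j \<in> I \<Longrightarrow> z \<bullet> nv j > a j"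
    and mono: "\<And>j u c. j \<in> I \<Longrightarrow> u > 0 \<Longrightarrow> c > 0 \<Longrightarrow> (p j u - p j c) * (u - c) \<ge> 0"
    and cont: "continuous_on {0<..} (p i)"
  obtains k1 k2 where
    "\<And>y. norm y \<le> R \<Longrightarrow> \<forall>j\<in>I. y \<bullet> nv j > a j \<Longrightarrow>
       \<bar>p i (y \<bullet> nv i - a i)\<bar> \<le> k1 * norm (\<Sum>j\<in>I. p j (y \<bullet> nv j - a j) *\<^sub>R nv j) + k2"
proof -
  define c where "c = z \<bullet> nv i - a i"
  have "c > 0" using z[OF \<open>i \<in> I\<close>] by (simp add: c_def)
  define S where "S = (\<Sum>j\<in>I. \<bar>p j (z \<bullet> nv j - a j)\<bar> * ((R + norm z) * norm (nv j)))"
  have "compact (p i ` {c / 2 .. R * norm (nv i) + \<bar>a i\<bar>})"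
    using \<open>c > 0\<close> by (intro compact_continuous_image continuous_on_subset[OF cont]) auto
  then obtain P where "0 < P" and P: "\<And>u. u \<in> {c / 2 .. R * norm (nv i) + \<bar>a i\<bar>} \<Longrightarrow> \<bar>p i u\<bar> \<le> P"
    using compact_imp_bounded bounded_pos by (metis imageI real_norm_def)
  show ?thesis
  proof (rule that[of "2 / c * (R + norm z)" "2 / c * S + P"])
    fix y assume yR: "norm y \<le> R" and y: "\<forall>j\<in>I. y \<bullet> nv j > a j"
    define u where "u = y \<bullet> nv i - a i"
    define G where "G = norm (\<Sum>j\<in>I. p j (y \<bullet> nv j - a j) *\<^sub>R nv j)"
    have Rz: "norm (y - z) \<le> R + norm z"
      using yR norm_triangle_ineq4[of y z] by linarith
    have yz: "\<bar>(y - z) \<bullet> nv j\<bar> \<le> (R + norm z) * norm (nv j)" for j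
      using Cauchy_Schwarz_ineq2[of "y - z" "nv j"] Rz by (meson mult_right_mono norm_ge_zero order_trans)
    have "0 \<le> R" using yR norm_ge_zero order_trans by blast
    then have "0 \<le> S"
      unfolding S_def by (intro sum_nonneg mult_nonneg_nonneg) auto
    have "\<bar>p i u * ((y - z) \<bullet> nv i)\<bar> \<le> G * norm (y - z) + S"
      using gradient_pairing_component_bound[OF assms(1,2) z _ mono, where y=y] y
        sum_mono[of I "\<lambda>j. \<bar>p j (z \<bullet> nv j - a j)\<bar> * \<bar>(y - z) \<bullet> nv j\<bar>"
          "\<lambda>j. \<bar>p j (z \<bullet> nv j - a j)\<bar> * ((R + norm z) * norm (nv j))"]
      unfolding u_def G_def S_def by (fastforce intro: mult_left_mono yz)
    also have "\<dots> \<le> G * (R + norm z) + S"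
      using Rz by (simp add: G_def mult_left_mono)
    finally have pair: "\<bar>p i u\<bar> * \<bar>(y - z) \<bullet> nv i\<bar> \<le> G * (R + norm z) + S"
      by (simp add: abs_mult)
    have "0 \<le> 2 / c * (R + norm z) * G"
      using \<open>c > 0\<close> \<open>0 \<le> R\<close> by (simp add: G_def)
    show "\<bar>p i u\<bar> \<le> 2 / c * (R + norm z) * G + (2 / c * S + P)"
    proof (cases "u < c / 2")
      case True
      have "(y - z) \<bullet> nv i = u - c"
        by (simp add: u_def c_def inner_diff_left)
      with True have "\<bar>p i u\<bar> * (c / 2) \<le> \<bar>p i u\<bar> * \<bar>(y - z) \<bullet> nv i\<bar>"
        by (intro mult_left_mono) (auto simp: abs_if)
      with pair have "\<bar>p i u\<bar> \<le> 2 / c * (G * (R + norm z) + S)"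
        using \<open>c > 0\<close> by (simp add: field_simps)
      then show ?thesis using \<open>0 < P\<close> by (simp add: algebra_simps add_divide_distrib)
    next
      case False
      have "\<bar>y \<bullet> nv i\<bar> \<le> R * norm (nv i)"
        using Cauchy_Schwarz_ineq2[of y "nv i"] yR by (meson mult_right_mono norm_ge_zero order_trans)
      with False have "\<bar>p i u\<bar> \<le> P"
        by (intro P) (auto simp: u_def)
      moreover have "0 \<le> 2 / c * S" using \<open>c > 0\<close> \<open>0 \<le> S\<close> by simp
      ultimately show ?thesis using \<open>0 \<le> 2 / c * (R + norm z) * G\<close> by linarith
    qed
  qed
qed

lemma set_nn_integral_gradient_component_finite:
  fixes Y :: "real \<Rightarrow> 'a::euclidean_space" and nv :: "'i \<Rightarrow> 'a" and p :: "'i \<Rightarrow> real \<Rightarrow> real"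
  assumes "continuous_on {0..t} Y"
    and inside: "AE s in lborel. s \<in> {0..t} \<longrightarrow> (\<forall>j\<in>I. Y s \<bullet> nv j > a j)"
    and "set_integrable lborel {0..t} (\<lambda>s. \<Sum>j\<in>I. p j (Y s \<bullet> nv j - a j) *\<^sub>R nv j)"
    and "finite I" "i \<in> I"
    and z: "\<And>j. j \<in> I \<Longrightarrow> z \<bullet> nv j > a j"
    and mono: "\<And>j u c. j \<in> I \<Longrightarrow> u > 0 \<Longrightarrow> c > 0 \<Longrightarrow> (p j u - p j c) * (u - c) \<ge> 0"
    and "continuous_on {0<..} (p i)"
  shows "(\<integral>\<^sup>+ s\<in>{0..t}. ennreal \<bar>p i (Y s \<bullet> nv i - a i)\<bar> \<partial>lborel) < \<infinity>"
proof -
  have "compact (Y ` {0..t})"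
    using assms(1) by (intro compact_continuous_image) auto
  then obtain R where R: "\<And>s. s \<in> {0..t} \<Longrightarrow> norm (Y s) \<le> R"
    using compact_imp_bounded bounded_pos by (metis imageI)
  obtain k1 k2 where k: "\<And>y. norm y \<le> R \<Longrightarrow> \<forall>j\<in>I. y \<bullet> nv j > a j \<Longrightarrow>
      \<bar>p i (y \<bullet> nv i - a i)\<bar> \<le> k1 * norm (\<Sum>j\<in>I. p j (y \<bullet> nv j - a j) *\<^sub>R nv j) + k2"
    using gradient_component_bound[where a=a and nv=nv and p=p, OF assms(4,5) z mono assms(8)] by blast
  have "AE s in lborel. s \<in> {0..t} \<longrightarrow> norm (p i (Y s \<bullet> nv i - a i))
      \<le> k1 * norm (\<Sum>j\<in>I. p j (Y s \<bullet> nv j - a j) *\<^sub>R nv j) + k2"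
    using inside by eventually_elim (use k R in auto)
  with assms(3) have "(\<integral>\<^sup>+ s\<in>{0..t}. ennreal (norm (p i (Y s \<bullet> nv i - a i))) \<partial>lborel) < \<infinity>"
    by (intro nn_integral_finite_if_le_affine_norm) (auto simp: emeasure_lborel_Icc_eq)
  then show ?thesis by simp
qed

theorem lemma2:
  fixes M :: "'w measure" and F :: "real \<Rightarrow> 'w measure"
    and B :: "real \<Rightarrow> 'w \<Rightarrow> real^'d"
    and m :: nat
    and \<phi> :: "nat \<Rightarrow> real \<Rightarrow> ereal" and \<phi>' :: "nat \<Rightarrow> real \<Rightarrow> real"
    and nv :: "nat \<Rightarrow> real^'d" and a :: "nat \<Rightarrow> real"
    and D :: "(real^'d) set"
    and X :: "real \<Rightarrow> 'w \<Rightarrow> real^'d" and L :: "real \<Rightarrow> 'w \<Rightarrow> real"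
  assumes "prob_space M"
    and "usual_conditions M F"
    and "brownian_motion M F B"
    and "m \<ge> 1"
    and "\<And>i. i \<in> {1..m} \<Longrightarrow> ereal_convex (\<phi> i) \<and> ereal_lsc (\<phi> i)"
    and "\<And>i x. i \<in> {1..m} \<Longrightarrow> x < 0 \<Longrightarrow> \<phi> i x = \<infinity>"
    and "\<And>i x. i \<in> {1..m} \<Longrightarrow> x > 0 \<Longrightarrow> \<bar>\<phi> i x\<bar> \<noteq> \<infinity>"
    and "\<And>i x. i \<in> {1..m} \<Longrightarrow> x > 0 \<Longrightarrow>
           ((\<lambda>y. real_of_ereal (\<phi> i y)) has_real_derivative \<phi>' i x) (at x)"
    and "\<And>i. i \<in> {1..m} \<Longrightarrow> continuous_on {0<..} (\<phi>' i)"
    and "\<And>i. i \<in> {1..m} \<Longrightarrow> norm (nv i) = 1"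
    and "inj_on nv {1..m}"
    and "D = {x. \<forall>i\<in>{1..m}. x \<bullet> nv i > a i}"
    and "D \<noteq> {}"
    and "msde_solution M F B D (\<lambda>x. \<Sum>i\<in>{1..m}. \<phi>' i (x \<bullet> nv i - a i) *\<^sub>R nv i) X L"
  shows "\<forall>i\<in>{1..m}. \<forall>t. 0 < t \<longrightarrow>
           (AE \<omega> in M. (\<integral>\<^sup>+ s\<in>{0..t}. ennreal \<bar>\<phi>' i (X s \<omega> \<bullet> nv i - a i)\<bar> \<partial>lborel) < \<infinity>)"
proof (intro ballI allI impI)
  fix i and t :: real
  assume i: "i \<in> {1..m}" and "0 < t"
  obtain z where z: "\<And>j. j \<in> {1..m} \<Longrightarrow> z \<bullet> nv j > a j"
    using assms(12,13) by blast
  have mono: "(\<phi>' j u - \<phi>' j c) * (u - c) \<ge> 0" if "j \<in> {1..m}" "u > 0" "c > 0" for j u c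
    using ereal_convex_deriv_monotone[OF _ assms(7,8)] assms(5) that by blast
  note solution = assms(14)[unfolded msde_solution_def, THEN conjunct2, THEN conjunct2]
  show "AE \<omega> in M. (\<integral>\<^sup>+ s\<in>{0..t}. ennreal \<bar>\<phi>' i (X s \<omega> \<bullet> nv i - a i)\<bar> \<partial>lborel) < \<infinity>"
    using solution[THEN conjunct2] AE_space
  proof eventually_elim
    case (elim \<omega>)
    have "continuous_on {0..t} (\<lambda>s. X s \<omega>)"
      using solution[THEN conjunct1] elim(2) continuous_on_subset by fastforce
    moreover have "AE s in lborel. s \<in> {0..t} \<longrightarrow> (\<forall>j\<in>{1..m}. X s \<omega> \<bullet> nv j > a j)"
      using elim(1)[THEN conjunct1] by eventually_elim (auto simp: assms(12))
    moreover have "set_integrable lborel {0..t} (\<lambda>s. \<Sum>j\<in>{1..m}. \<phi>' j (X s \<omega> \<bullet> nv j - a j) *\<^sub>R nv j)"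
      using elim(1)[THEN conjunct2] less_imp_le[OF \<open>0 < t\<close>] by blast
    ultimately show ?case
      by (rule set_nn_integral_gradient_component_finite[where z=z]) (use i z mono assms(9) in auto)
  qed
qed

end
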